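(* Let $F$ be a complete Gårding–Dirichlet polynomial on $\mathrm{Sym}^2(\mathbb{R}^n)$ with Gårding cone $\Gamma$. Then for every $A\in\Gamma$ the gradient $(\nabla F)_A$ is positive definite; i.e. the linearization $B\mapsto\langle(\nabla F)_A,B\rangle$ at $A$ is uniformly elliptic.
   Context: $\mathrm{Sym}^2(\mathbb{R}^n)$ is the space of real symmetric $n\times n$ matrices with inner product $\langle A,B\rangle=\mathrm{tr}(AB)$; $(\nabla F)_A\in\mathrm{Sym}^2(\mathbb{R}^n)$ is the gradient of $F$ at $A$ for this inner product. A Gårding–Dirichlet (G-D) polynomial of degree $N$ on $\mathrm{Sym}^2(\mathbb{R}^n)$ is a real homogeneous polynomial $F$ of degree $N$ with $F(I)>0$ such that for every $A$ the polynomial $t\mapsto F(tI+A)$ has only real roots, and whose Gårding cone $\Gamma$ — the connected component of $\{A: F(A)\ne 0\}$ containing $I$ — contains all positive definite matrices. The edge of $F$ is $E=\overline\Gamma\cap(-\overline\Gamma)$, the largest linear subspace contained in $\overline\Gamma$. $F$ is called complete if $\mathcal{P}\cap E=\{0\}$, where $\mathcal{P}$ is the cone of positive semidefinite matrices. *)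

theory Defs
  imports "HOL-Analysis.Analysis" "HOL-Computational_Algebra.Polynomial"
begin

definition Sym2 :: "(real^'n^'n) set" where
  "Sym2 = {A. transpose A = A}"

definition pos_def :: "real^'n^'n \<Rightarrow> bool" where
  "pos_def A \<longleftrightarrow> (\<forall>x. x \<noteq> 0 \<longrightarrow> x \<bullet> (A *v x) > 0)"

definition pos_semidef :: "real^'n^'n \<Rightarrow> bool" where
  "pos_semidef A \<longleftrightarrow> (\<forall>x. x \<bullet> (A *v x) \<ge> 0)"

definition homog_poly_Sym2 :: "nat \<Rightarrow> (real^'n^'n \<Rightarrow> real) \<Rightarrow> bool" where
  "homog_poly_Sym2 N F \<longleftrightarrow>
     (\<exists>c :: ('n \<times> 'n \<Rightarrow> nat) \<Rightarrow> real.
        \<forall>A\<in>Sym2. F A = (\<Sum>\<alpha>\<in>{\<alpha>. (\<Sum>p\<in>UNIV. \<alpha> p) = N}.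
                          c \<alpha> * (\<Prod>p\<in>UNIV. (A $ fst p $ snd p) ^ \<alpha> p)))"

definition real_rooted_along_I :: "(real^'n^'n \<Rightarrow> real) \<Rightarrow> real^'n^'n \<Rightarrow> bool" where
  "real_rooted_along_I F A \<longleftrightarrow>
     (\<exists>p :: real poly. (\<forall>t. poly p t = F (t *\<^sub>R mat 1 + A)) \<and>
        (\<forall>z. poly (map_poly complex_of_real p) z = 0 \<longrightarrow> z \<in> \<real>))"

definition garding_cone :: "(real^'n^'n \<Rightarrow> real) \<Rightarrow> (real^'n^'n) set" where
  "garding_cone F = connected_component_set {A \<in> Sym2. F A \<noteq> 0} (mat 1)"

definition GD_poly :: "nat \<Rightarrow> (real^'n^'n \<Rightarrow> real) \<Rightarrow> bool" where
  "GD_poly N F \<longleftrightarrow> homog_poly_Sym2 N F \<and> F (mat 1) > 0 \<and>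
     (\<forall>A\<in>Sym2. real_rooted_along_I F A) \<and>
     (\<forall>A\<in>Sym2. pos_def A \<longrightarrow> A \<in> garding_cone F)"

definition edge :: "(real^'n^'n \<Rightarrow> real) \<Rightarrow> (real^'n^'n) set" where
  "edge F = {A. A \<in> closure (garding_cone F) \<and> - A \<in> closure (garding_cone F)}"

definition complete_GD :: "nat \<Rightarrow> (real^'n^'n \<Rightarrow> real) \<Rightarrow> bool" where
  "complete_GD N F \<longleftrightarrow> GD_poly N F \<and> {P\<in>Sym2. pos_semidef P} \<inter> edge F = {0}"

definition is_gradient :: "(real^'n^'n \<Rightarrow> real) \<Rightarrow> real^'n^'n \<Rightarrow> real^'n^'n \<Rightarrow> bool" where
  "is_gradient F A G \<longleftrightarrow> G \<in> Sym2 \<and>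
     (\<forall>B\<in>Sym2. ((\<lambda>t. F (A + t *\<^sub>R B)) has_real_derivative trace (G ** B)) (at 0))"

end

theory Submission
  imports Defs "HOL-Complex_Analysis.Complex_Analysis"
    "HOL-Computational_Algebra.Fundamental_Theorem_Algebra"
begin

text \<open>
  For a direction e with F e > 0 along which F is real-rooted, let \<open>\<Gamma>(e)\<close> be the set of
  symmetric y such that \<open>t \<mapsto> F (t e + y)\<close> has no root in \<open>[0, \<infinity>)\<close>. The basic tool is
  Hurwitz's theorem: along a connected family of complexified lines \<open>s \<mapsto> F (u + s e)\<close>, a region
  of the s-plane whose boundary no zero can reach stays zero-free once it is zero-free for one
  member. This shows that the Garding cone is \<open>\<Gamma>(I)\<close>, that every \<open>y \<in> \<Gamma>(e)\<close> is again a
  direction of real-rootedness (Garding), and that \<open>\<Gamma>(y) \<subseteq> \<Gamma>(e)\<close>; hence \<open>\<Gamma>(I)\<close> is closed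
  under addition and open along I.

  For \<open>A \<in> \<Gamma>\<close> and \<open>P = x x\<^sup>T\<close> the matrices \<open>A + r P\<close>, \<open>r \<ge> 0\<close>, stay in \<open>\<Gamma>\<close>, so all roots of
  \<open>q t = F (A + t P)\<close> are real and negative, whence \<open>x\<^sup>T (\<nabla>F)\<^sub>A x = q'(0) > 0\<close> unless q is
  constant. If q is constant then both P and -P are limits of points of \<open>\<Gamma>\<close>, so P lies in the
  edge and completeness forces \<open>x = 0\<close>.
\<close>

section \<open>Zeros of continuous families of holomorphic functions\<close>

lemma uniform_limit_jointly_continuous:
  fixes f :: "'a::heine_borel \<Rightarrow> complex \<Rightarrow> complex"
  assumes cont: "continuous_on (T \<times> UNIV) (\<lambda>(u,s). f u s)"
    and g: "\<And>n. g n \<in> T" "g \<longlonglongrightarrow> x" "x \<in> T" and K: "compact K"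
  shows "uniform_limit K (\<lambda>n. f (g n)) (f x) sequentially"
proof -
  let ?D = "insert x (range g) \<times> K"
  have "compact ?D" using compact_sequence_with_limit[OF g(2)] K by (rule compact_Times)
  moreover have "?D \<subseteq> T \<times> UNIV" using g by auto
  ultimately have uc: "uniformly_continuous_on ?D (\<lambda>(u,s). f u s)"
    using cont continuous_on_subset compact_uniformly_continuous by blast
  show ?thesis unfolding uniform_limit_iff
  proof (intro allI impI)
    fix e :: real assume "e > 0"
    then obtain d where d: "d > 0" and
      dd: "\<And>a b. a \<in> ?D \<Longrightarrow> b \<in> ?D \<Longrightarrow> dist a b < d \<Longrightarrow> dist ((\<lambda>(u,s). f u s) a) ((\<lambda>(u,s). f u s) b) < e"
      using uc unfolding uniformly_continuous_on_def by metis
    have "\<forall>\<^sub>F n in sequentially. dist (g n) x < d" using g(2) d by (simp add: tendsto_iff)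
    then show "\<forall>\<^sub>F n in sequentially. \<forall>s\<in>K. dist (f (g n) s) (f x s) < e"
    proof (rule eventually_mono)
      fix n assume dn: "dist (g n) x < d"
      show "\<forall>s\<in>K. dist (f (g n) s) (f x s) < e"
      proof
        fix s assume "s \<in> K"
        then have "(g n, s) \<in> ?D" "(x, s) \<in> ?D" by auto
        moreover have "dist (g n, s) (x, s) < d" using dn by (simp add: dist_Pair_Pair)
        ultimately show "dist (f (g n) s) (f x s) < e" using dd by fastforce
      qed
    qed
  qed
qed

text \<open>A limit of zeros is a zero by continuity; it cannot escape from \<open>Om\<close> since zeros stay in
  \<open>W\<close> and there are none on the part of the boundary of \<open>Om\<close> reachable within \<open>W\<close>.\<close>

lemma closedin_parameters_with_zero:
  fixes f :: "'a::heine_borel \<Rightarrow> complex \<Rightarrow> complex"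
  assumes cont: "continuous_on (T \<times> UNIV) (\<lambda>(u,s). f u s)"
    and zeros_in_W: "\<And>u s. u \<in> T \<Longrightarrow> f u s = 0 \<Longrightarrow> s \<in> W"
    and boundary: "\<And>u s. u \<in> T \<Longrightarrow> s \<in> closure (Om \<inter> W) \<Longrightarrow> s \<notin> Om \<Longrightarrow> f u s \<noteq> 0"
    and roots_bounded: "\<And>u. u \<in> T \<Longrightarrow>
           \<exists>e>0. \<exists>R. \<forall>v\<in>T. dist v u < e \<longrightarrow> (\<forall>s. f v s = 0 \<longrightarrow> norm s \<le> R)"
  shows "closedin (top_of_set T) {u\<in>T. \<exists>s\<in>Om. f u s = 0}"
  unfolding closedin_limpt
proof (intro conjI allI impI)
  let ?Z = "{u\<in>T. \<exists>s\<in>Om. f u s = 0}"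
  show "?Z \<subseteq> T" by auto
  fix x assume "x islimpt ?Z \<and> x \<in> T"
  then have xl: "x islimpt ?Z" and xT: "x \<in> T" by auto
  obtain g where g: "\<And>n. g n \<in> ?Z - {x}" and gx: "g \<longlonglongrightarrow> x"
    using xl[unfolded islimpt_sequential] by blast
  have gT: "g n \<in> T" for n using g by auto
  have "\<forall>n. \<exists>s. s \<in> Om \<and> f (g n) s = 0" using g by blast
  then obtain z where "\<forall>n. z n \<in> Om \<and> f (g n) (z n) = 0" by (rule choice[THEN exE])
  then have z: "\<And>n. z n \<in> Om" "\<And>n. f (g n) (z n) = 0" by auto
  obtain e R where e: "e > 0" and eR: "\<forall>v\<in>T. dist v x < e \<longrightarrow> (\<forall>s. f v s = 0 \<longrightarrow> norm s \<le> R)"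
    using roots_bounded[OF xT] by blast
  obtain n0 where n0: "\<And>n. n \<ge> n0 \<Longrightarrow> dist (g n) x < e"
    using gx e unfolding lim_sequentially by blast
  define z' where "z' n = z (n + n0)" for n
  define g' where "g' n = g (n + n0)" for n
  have "norm (z' n) \<le> R" for n
  proof -
    have "dist (g (n+n0)) x < e" using n0 by simp
    then show ?thesis using eR gT[of "n+n0"] z(2)[of "n+n0"] unfolding z'_def by blast
  qed
  then have "bounded (range z')" by (auto intro!: boundedI)
  then obtain l r where r: "strict_mono r" and zl: "(z' \<circ> r) \<longlonglongrightarrow> l"
    using bounded_imp_convergent_subsequence by blast
  have "(g' \<circ> r) \<longlonglongrightarrow> x"
    using LIMSEQ_subseq_LIMSEQ[OF LIMSEQ_ignore_initial_segment[OF gx, of n0] r]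
    unfolding g'_def comp_def by simp
  then have "((\<lambda>n. (g' (r n), z' (r n))) \<longlonglongrightarrow> (x, l))"
    using zl unfolding comp_def by (intro tendsto_Pair) auto
  moreover have "(x, l) \<in> T \<times> UNIV" using xT by simp
  moreover have "\<forall>\<^sub>F n in sequentially. (g' (r n), z' (r n)) \<in> T \<times> UNIV"
    using gT unfolding g'_def by simp
  ultimately have "((\<lambda>n. (\<lambda>(u,s). f u s) (g' (r n), z' (r n))) \<longlonglongrightarrow> (\<lambda>(u,s). f u s) (x, l))"
    by (intro continuous_on_tendsto_compose[OF cont])
  moreover have "(\<lambda>n. (\<lambda>(u,s). f u s) (g' (r n), z' (r n))) = (\<lambda>n. 0)"
    using z unfolding g'_def z'_def by simp
  ultimately have "(\<lambda>n. 0::complex) \<longlonglongrightarrow> f x l" by simp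
  then have fl: "f x l = 0" using LIMSEQ_unique[OF tendsto_const] by metis
  have "(z' \<circ> r) n \<in> Om \<inter> W" for n
    using z(1) zeros_in_W[OF gT z(2)] unfolding z'_def comp_def by blast
  then have "l \<in> closure (Om \<inter> W)" using zl closure_sequential by blast
  then have "l \<in> Om" using boundary[OF xT] fl by metis
  then show "x \<in> ?Z" using xT fl by blast
qed

lemma closedin_parameters_zero_free:
  fixes f :: "'a::heine_borel \<Rightarrow> complex \<Rightarrow> complex"
  assumes Om: "open Om" "connected Om"
    and cont: "continuous_on (T \<times> UNIV) (\<lambda>(u,s). f u s)"
    and hol: "\<And>u. u \<in> T \<Longrightarrow> f u holomorphic_on Om"
    and nonconst: "\<And>u. u \<in> T \<Longrightarrow> \<not> f u constant_on Om"
  shows "closedin (top_of_set T) {u\<in>T. \<forall>s\<in>Om. f u s \<noteq> 0}"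
  unfolding closedin_limpt
proof (intro conjI allI impI)
  let ?Y = "{u\<in>T. \<forall>s\<in>Om. f u s \<noteq> 0}"
  show "?Y \<subseteq> T" by auto
  fix x assume "x islimpt ?Y \<and> x \<in> T"
  then have xl: "x islimpt ?Y" and xT: "x \<in> T" by auto
  obtain g where g: "\<And>n. g n \<in> ?Y - {x}" and gx: "g \<longlonglongrightarrow> x"
    using xl[unfolded islimpt_sequential] by blast
  have gT: "g n \<in> T" for n using g by auto
  have "f x w \<noteq> 0" if "w \<in> Om" for w
  proof (rule Hurwitz_no_zeros[OF Om, of "\<lambda>n. f (g n)" "f x" w])
    show "f (g n) holomorphic_on Om" for n using hol gT by blast
    show "f x holomorphic_on Om" using hol xT by blast
    show "uniform_limit K (\<lambda>n. f (g n)) (f x) sequentially" if "compact K" "K \<subseteq> Om" for K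
      using uniform_limit_jointly_continuous[OF cont gT gx xT that(1)] .
    show "\<not> f x constant_on Om" using nonconst xT by blast
    show "f (g n) z \<noteq> 0" if "z \<in> Om" for n z using g that by auto
  qed (rule that)
  then show "x \<in> ?Y" using xT by auto
qed

lemma zero_free_connected_family:
  fixes f :: "'a::heine_borel \<Rightarrow> complex \<Rightarrow> complex"
  assumes T: "connected T" "u0 \<in> T" and Om: "open Om" "connected Om"
    and cont: "continuous_on (T \<times> UNIV) (\<lambda>(u,s). f u s)"
    and hol: "\<And>u. u \<in> T \<Longrightarrow> f u holomorphic_on Om"
    and nonconst: "\<And>u. u \<in> T \<Longrightarrow> \<not> f u constant_on Om"
    and zeros_in_W: "\<And>u s. u \<in> T \<Longrightarrow> f u s = 0 \<Longrightarrow> s \<in> W"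
    and boundary: "\<And>u s. u \<in> T \<Longrightarrow> s \<in> closure (Om \<inter> W) \<Longrightarrow> s \<notin> Om \<Longrightarrow> f u s \<noteq> 0"
    and roots_bounded: "\<And>u. u \<in> T \<Longrightarrow>
           \<exists>e>0. \<exists>R. \<forall>v\<in>T. dist v u < e \<longrightarrow> (\<forall>s. f v s = 0 \<longrightarrow> norm s \<le> R)"
    and start: "\<And>s. s \<in> Om \<Longrightarrow> f u0 s \<noteq> 0"
    and "u \<in> T" "s \<in> Om"
  shows "f u s \<noteq> 0"
proof -
  let ?Z = "{u\<in>T. \<exists>s\<in>Om. f u s = 0}"
  have "closedin (top_of_set T) ?Z"
    by (rule closedin_parameters_with_zero[OF cont zeros_in_W boundary roots_bounded])
  moreover have "openin (top_of_set T) ?Z"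
  proof -
    have "T - ?Z = {u\<in>T. \<forall>s\<in>Om. f u s \<noteq> 0}" by auto
    then have "closedin (top_of_set T) (T - ?Z)"
      using closedin_parameters_zero_free[OF Om cont hol nonconst] by simp
    then have "openin (top_of_set T) (T - (T - ?Z))"
      by (rule openin_diff[OF openin_subtopology_self])
    moreover have "T - (T - ?Z) = ?Z" by auto
    ultimately show ?thesis by simp
  qed
  ultimately have "?Z = {} \<or> ?Z = T" using T(1) connected_clopen by blast
  then show ?thesis using T(2) start \<open>u \<in> T\<close> \<open>s \<in> Om\<close> by auto
qed

lemma not_bounded_upper_half_plane: "\<not> bounded {z::complex. 0 < Im z}"
proof
  assume "bounded {z::complex. 0 < Im z}"
  then obtain a where "\<And>z::complex. 0 < Im z \<Longrightarrow> norm z \<le> a" by (auto simp: bounded_iff)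
  from this[of "\<i> * of_real (\<bar>a\<bar> + 1)"] show False by (simp add: norm_mult) linarith
qed

lemma not_bounded_slit_plane: "\<not> bounded (- \<real>\<^sub>\<le>\<^sub>0 :: complex set)"
proof
  assume "bounded (- \<real>\<^sub>\<le>\<^sub>0 :: complex set)"
  then obtain a where "\<And>z::complex. z \<notin> \<real>\<^sub>\<le>\<^sub>0 \<Longrightarrow> norm z \<le> a" by (auto simp: bounded_iff)
  from this[of "of_real (\<bar>a\<bar> + 1)"] show False by (simp add: complex_nonpos_Reals_iff) linarith
qed

lemma connected_slit_plane: "connected (- \<real>\<^sub>\<le>\<^sub>0 :: complex set)"
proof -
  have "\<real>\<^sub>\<le>\<^sub>0 = complex_of_real ` {..0}"
    by (auto simp: complex_nonpos_Reals_iff complex_eq_iff image_iff)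
  then show ?thesis
    by (metis starlike_imp_connected starlike_slotted_complex_plane_left)
qed

lemma slit_plane_real_boundary:
  fixes s :: complex
  assumes "s \<in> closure (- \<real>\<^sub>\<le>\<^sub>0 \<inter> \<real>)" "s \<notin> - \<real>\<^sub>\<le>\<^sub>0"
  shows "s = 0"
proof -
  have "- \<real>\<^sub>\<le>\<^sub>0 \<inter> \<real> \<subseteq> {z. Re z \<ge> 0}"
    by (auto simp: complex_nonpos_Reals_iff complex_is_Real_iff)
  then have "closure (- \<real>\<^sub>\<le>\<^sub>0 \<inter> \<real>) \<subseteq> {z. Re z \<ge> 0}"
    by (rule closure_minimal) (rule closed_halfspace_Re_ge)
  then have "0 \<le> Re s" using assms(1) by blast
  then show "s = 0" using assms(2) by (simp add: complex_nonpos_Reals_iff complex_eq_iff)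
qed

lemma dist_Pair_le_add: "dist (a, b) (c, d) \<le> dist a c + dist b d"
  unfolding dist_prod_def by (simp add: sqrt_sum_squares_le_sum)

section \<open>Real polynomials with negative real roots\<close>

lemma poly_map_poly_of_real:
  "poly (map_poly of_real p) (of_real x) = (of_real (poly p x) :: 'a::{real_algebra_1,comm_semiring_0})"
  by (induction p) (auto simp: map_poly_pCons)

lemma complex_poly_eqI_on_reals:
  fixes Q1 Q2 :: "complex poly"
  assumes "\<And>t::real. poly Q1 (of_real t) = poly Q2 (of_real t)"
  shows "Q1 = Q2"
proof (rule ccontr)
  assume "Q1 \<noteq> Q2"
  then have "finite {x. poly (Q1 - Q2) x = 0}" by (intro poly_roots_finite) simp
  moreover have "range (of_real :: real \<Rightarrow> complex) \<subseteq> {x. poly (Q1 - Q2) x = 0}"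
    using assms by auto
  moreover have "infinite (range (of_real :: real \<Rightarrow> complex))"
    using inj_of_real infinite_UNIV_char_0 finite_imageD by blast
  ultimately show False using finite_subset by blast
qed

lemma map_poly_of_real_mult:
  fixes p q :: "real poly"
  shows "map_poly (of_real :: real \<Rightarrow> complex) (p * q) = map_poly of_real p * map_poly of_real q"
  by (rule complex_poly_eqI_on_reals) (simp add: poly_map_poly_of_real)

text \<open>This is \<open>q'(0)/q(0) = \<Sum>\<^sub>i 1/(-r\<^sub>i)\<close> over the roots \<open>r\<^sub>i\<close>, proved by peeling off one root.\<close>

lemma pderiv_pos_at_0_if_negative_roots:
  fixes q :: "real poly"
  assumes "0 < degree q" and "0 < poly q 0"
    and "\<And>z. poly (map_poly of_real q) z = (0::complex) \<Longrightarrow> z \<in> \<real> \<and> Re z < 0"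
  shows "0 < poly (pderiv q) 0"
  using assms
proof (induction "degree q" arbitrary: q)
  case 0
  then show ?case by simp
next
  case (Suc n)
  note IH = Suc.hyps(1)
  have "degree (map_poly (of_real :: real \<Rightarrow> complex) q) = Suc n"
    using Suc.hyps(2) by (simp add: degree_map_poly)
  then have "\<not> constant (poly (map_poly (of_real :: real \<Rightarrow> complex) q))"
    by (simp add: constant_degree)
  then obtain z :: complex where z: "poly (map_poly of_real q) z = 0"
    using fundamental_theorem_of_algebra by blast
  then have "z \<in> \<real>" "Re z < 0" using Suc.prems(3) by auto
  then obtain r where r: "z = of_real r" "r < 0" by (auto elim: Reals_cases)
  then have "poly q r = 0" using z by (simp add: poly_map_poly_of_real)
  then obtain q' where q': "q = [:-r, 1:] * q'" using poly_eq_0_iff_dvd by (metis dvdE)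
  then have "q' \<noteq> 0" using Suc.hyps(2) by auto
  then have "degree q = Suc (degree q')" unfolding q' by (subst degree_mult_eq) auto
  then have dq': "degree q' = n" using Suc.hyps(2) by simp
  have roots': "poly (map_poly of_real q') w = 0 \<Longrightarrow> w \<in> \<real> \<and> Re w < 0" for w :: complex
    using Suc.prems(3)[of w] unfolding q' map_poly_of_real_mult by simp
  have "poly q 0 = - r * poly q' 0" unfolding q' by simp
  then have q'_pos: "poly q' 0 > 0" using Suc.prems(2) r(2) by (simp add: mult_less_0_iff)
  have "pderiv q = [:-r, 1:] * pderiv q' + q' * pderiv [:-r, 1:]"
    unfolding q' by (rule pderiv_mult)
  then have deriv: "poly (pderiv q) 0 = - r * poly (pderiv q') 0 + poly q' 0"
    by (simp add: pderiv_pCons)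
  show ?case
  proof (cases n)
    case 0
    then have "pderiv q' = 0" using dq' by (simp add: pderiv_eq_0_iff)
    then show ?thesis using deriv q'_pos by simp
  next
    case Suc
    then have "0 < poly (pderiv q') 0" using IH dq' q'_pos roots' by simp
    then have "r * poly (pderiv q') 0 < 0" using r(2) by (rule mult_neg_pos[rotated])
    then show ?thesis using deriv q'_pos by simp
  qed
qed

lemma Sym2_iff: "A \<in> Sym2 \<longleftrightarrow> (\<forall>i j. A $ i $ j = A $ j $ i)"
  unfolding Sym2_def transpose_def by (auto simp: vec_eq_iff)

lemma Sym2_add: "A \<in> Sym2 \<Longrightarrow> B \<in> Sym2 \<Longrightarrow> A + B \<in> Sym2"
  by (simp add: Sym2_iff)

lemma Sym2_scaleR: "A \<in> Sym2 \<Longrightarrow> t *\<^sub>R A \<in> Sym2"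
  by (simp add: Sym2_iff)

lemma Sym2_diff: "A \<in> Sym2 \<Longrightarrow> B \<in> Sym2 \<Longrightarrow> A - B \<in> Sym2"
  by (simp add: Sym2_iff)

lemma Sym2_mat: "mat k \<in> Sym2"
  by (simp add: Sym2_def)

lemma convex_Sym2: "convex Sym2"
  by (auto simp: convex_def Sym2_add Sym2_scaleR)

lemma pos_def_scaleR_add_mat:
  fixes P :: "real^'n^'n"
  assumes "pos_semidef P" "0 \<le> s" "0 < d"
  shows "pos_def (s *\<^sub>R P + d *\<^sub>R mat 1)"
  unfolding pos_def_def
proof (intro allI impI)
  fix y :: "real^'n" assume "y \<noteq> 0"
  have "y \<bullet> ((s *\<^sub>R P + d *\<^sub>R mat 1) *v y) = s * (y \<bullet> (P *v y)) + d * (y \<bullet> y)"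
    by (simp add: matrix_vector_mult_add_rdistrib scaleR_matrix_vector_assoc[symmetric] inner_add_right)
  moreover have "0 \<le> s * (y \<bullet> (P *v y))" using assms by (simp add: pos_semidef_def)
  moreover have "0 < d * (y \<bullet> y)" using \<open>y \<noteq> 0\<close> \<open>0 < d\<close> by simp
  ultimately show "0 < y \<bullet> ((s *\<^sub>R P + d *\<^sub>R mat 1) *v y)" by simp
qed

definition outer_product :: "real^'n \<Rightarrow> real^'n^'n" where
  "outer_product x = (\<chi> i j. x $ i * x $ j)"

lemma outer_product_Sym2: "outer_product x \<in> Sym2"
  by (simp add: outer_product_def Sym2_iff mult.commute)

lemma pos_semidef_outer_product: "pos_semidef (outer_product x)"
proof -
  have "outer_product x *v y = (x \<bullet> y) *\<^sub>R x" for y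
    by (simp add: outer_product_def vec_eq_iff matrix_vector_mult_def inner_vec_def
        sum_distrib_left algebra_simps)
  then show ?thesis by (simp add: pos_semidef_def inner_commute)
qed

lemma outer_product_eq_0_iff: "outer_product x = 0 \<longleftrightarrow> x = 0"
proof
  assume "outer_product x = 0"
  then have "outer_product x $ i $ i = 0" for i by simp
  then have "x $ i * x $ i = 0" for i by (simp add: outer_product_def)
  then show "x = 0" by (simp add: vec_eq_iff)
qed (simp add: outer_product_def vec_eq_iff)

lemma inner_mult_vec_eq_trace_outer_product: "x \<bullet> (G *v x) = trace (G ** outer_product x)"
  unfolding trace_def matrix_matrix_mult_def matrix_vector_mult_def inner_vec_def outer_product_def
  by (simp add: sum_distrib_left algebra_simps)

definition matrix_unit :: "'n \<Rightarrow> 'n \<Rightarrow> real^'n^'n" where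
  "matrix_unit i j = (\<chi> a b. if a = i \<and> b = j then 1 else 0)"

lemma matrix_eq_sum_matrix_unit: "(B::real^'n^'n) = (\<Sum>i\<in>UNIV. \<Sum>j\<in>UNIV. B $ i $ j *\<^sub>R matrix_unit i j)"
proof -
  have *: "(\<Sum>y\<in>UNIV. if a = x \<and> b = y then f y else 0) = (if a = x then f b else (0::real))"
    for a x b and f :: "'n \<Rightarrow> real"
    by (cases "a = x") (simp_all add: sum.delta)
  have **: "(\<Sum>x\<in>UNIV. if a = x then f x else 0) = (f a :: real)" for a and f :: "'n \<Rightarrow> real"
    by (simp add: sum.delta)
  show ?thesis by (simp add: vec_eq_iff matrix_unit_def if_distrib * ** cong: if_cong)
qed

lemma trace_mult_Sym2:
  "B \<in> Sym2 \<Longrightarrow> trace (G ** B) = (\<Sum>i\<in>UNIV. \<Sum>j\<in>UNIV. G $ i $ j * B $ i $ j)"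
  unfolding trace_def matrix_matrix_mult_def Sym2_iff by simp

text \<open>Riesz representation on \<open>Sym2\<close> for the trace form; the representing matrix is the
  symmetrization of \<open>(L E\<^sub>i\<^sub>j)\<^sub>i\<^sub>j\<close>.\<close>

lemma linear_eq_trace_Sym2:
  fixes L :: "real^'n^'n \<Rightarrow> real"
  assumes lin: "linear L"
  shows "\<exists>G\<in>Sym2. \<forall>B\<in>Sym2. L B = trace (G ** B)"
proof -
  define H where "H = (\<chi> i j. L (matrix_unit i j))"
  define G where "G = (\<chi> i j. (H $ i $ j + H $ j $ i) / 2)"
  have "L B = trace (G ** B)" if B: "B \<in> Sym2" for B
  proof -
    have "L B = (\<Sum>i\<in>UNIV. \<Sum>j\<in>UNIV. H $ i $ j * B $ i $ j)"
      by (subst matrix_eq_sum_matrix_unit)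
        (simp add: linear_sum[OF lin] linear_scale[OF lin] H_def mult.commute)
    moreover have "(\<Sum>i\<in>UNIV. \<Sum>j\<in>UNIV. H $ j $ i * B $ i $ j) = (\<Sum>i\<in>UNIV. \<Sum>j\<in>UNIV. H $ i $ j * B $ i $ j)"
      using B by (subst sum.swap) (simp add: Sym2_iff)
    moreover have "trace (G ** B) =
        ((\<Sum>i\<in>UNIV. \<Sum>j\<in>UNIV. H $ i $ j * B $ i $ j) + (\<Sum>i\<in>UNIV. \<Sum>j\<in>UNIV. H $ j $ i * B $ i $ j)) / 2"
      unfolding trace_mult_Sym2[OF B] G_def
      by (simp add: algebra_simps add_divide_distrib sum.distrib flip: sum_divide_distrib)
    ultimately show ?thesis by simp
  qed
  moreover have "G \<in> Sym2" by (simp add: Sym2_iff G_def)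
  ultimately show ?thesis by blast
qed

lemma has_derivative_monomial_sum:
  "\<exists>L. ((\<lambda>M::real^'n^'n. \<Sum>\<alpha>\<in>S. c \<alpha> * (\<Prod>p\<in>UNIV. (M $ fst p $ snd p) ^ \<alpha> p)) has_derivative L) (at A)"
  by (rule exI, rule has_derivative_sum, rule has_derivative_mult_right, rule has_derivative_prod,
      rule has_derivative_power, rule bounded_linear_imp_has_derivative,
      rule bounded_linear_compose[OF bounded_linear_vec_nth bounded_linear_vec_nth])

section \<open>Polynomials on \<open>Sym2\<close> that are real-rooted along the identity\<close>

lemma sum_prod_linear_eq_poly:
  fixes k :: "('p \<Rightarrow> nat) \<Rightarrow> 'c::comm_ring_1" and a b :: "'p \<Rightarrow> 'c"
  shows "(\<Sum>\<alpha>\<in>S. k \<alpha> * (\<Prod>p\<in>P. (a p + z * b p) ^ \<alpha> p)) =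
     poly (\<Sum>\<alpha>\<in>S. smult (k \<alpha>) (\<Prod>p\<in>P. [:a p, b p:] ^ \<alpha> p)) z"
  by (simp add: poly_sum poly_prod algebra_simps)

locale hyperbolic_polynomial =
  fixes F :: "real^'n^'n \<Rightarrow> real" and N :: nat and c :: "('n \<times> 'n \<Rightarrow> nat) \<Rightarrow> real"
  assumes F_eq_monomial_sum: "\<And>A. A \<in> Sym2 \<Longrightarrow>
      F A = (\<Sum>\<alpha>\<in>{\<alpha>. (\<Sum>p\<in>UNIV. \<alpha> p) = N}. c \<alpha> * (\<Prod>p\<in>UNIV. (A $ fst p $ snd p) ^ \<alpha> p))"
    and F_mat_1_pos: "0 < F (mat 1)"
    and real_rooted: "\<And>A. A \<in> Sym2 \<Longrightarrow> real_rooted_along_I F A"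
    and degree_pos: "1 \<le> N"
begin

definition exponents :: "('n \<times> 'n \<Rightarrow> nat) set" where
  "exponents = {\<alpha>. (\<Sum>p\<in>UNIV. \<alpha> p) = N}"

text \<open>The polynomial F evaluated at complex, not necessarily symmetric, matrix entries.\<close>

definition Fc :: "('n \<times> 'n \<Rightarrow> complex) \<Rightarrow> complex" where
  "Fc M = (\<Sum>\<alpha>\<in>exponents. of_real (c \<alpha>) * (\<Prod>p\<in>UNIV. M p ^ \<alpha> p))"

definition cmat :: "real^'n^'n \<Rightarrow> 'n \<times> 'n \<Rightarrow> complex" where
  "cmat X p = of_real (X $ fst p $ snd p)"

lemma cmat_add: "cmat (X + Y) = (\<lambda>p. cmat X p + cmat Y p)"
  by (simp add: cmat_def fun_eq_iff)

lemma cmat_scaleR: "cmat (a *\<^sub>R X) = (\<lambda>p. of_real a * cmat X p)"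
  by (simp add: cmat_def fun_eq_iff)

lemma continuous_on_cmat: "continuous_on T (\<lambda>u. cmat u p)"
  unfolding cmat_def by (intro continuous_intros)

lemma Fc_cmat: "X \<in> Sym2 \<Longrightarrow> Fc (cmat X) = of_real (F X)"
  unfolding Fc_def cmat_def F_eq_monomial_sum exponents_def by simp

lemma Fc_cmat_line:
  "X \<in> Sym2 \<Longrightarrow> Y \<in> Sym2 \<Longrightarrow> Fc (\<lambda>p. cmat X p + of_real t * cmat Y p) = of_real (F (X + t *\<^sub>R Y))"
  using Fc_cmat[of "X + t *\<^sub>R Y"] by (simp add: cmat_add cmat_scaleR Sym2_add Sym2_scaleR)

lemma Fc_scale: "Fc (\<lambda>p. z * M p) = z ^ N * Fc M"
proof -
  have "(\<Prod>p\<in>UNIV. (z * M p) ^ \<alpha> p) = z ^ N * (\<Prod>p\<in>UNIV. M p ^ \<alpha> p)" if "\<alpha> \<in> exponents" for \<alpha>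
  proof -
    have "(\<Prod>p\<in>UNIV. (z * M p) ^ \<alpha> p) = (\<Prod>p\<in>UNIV. z ^ \<alpha> p) * (\<Prod>p\<in>UNIV. M p ^ \<alpha> p)"
      by (simp add: power_mult_distrib prod.distrib)
    also have "(\<Prod>p\<in>UNIV. z ^ \<alpha> p) = z ^ N"
      using that by (simp add: exponents_def flip: power_sum)
    finally show ?thesis .
  qed
  then show ?thesis unfolding Fc_def by (simp add: sum_distrib_left algebra_simps)
qed

lemma Fc_cnj: "Fc (\<lambda>p. cnj (M p)) = cnj (Fc M)"
  unfolding Fc_def by simp

lemma continuous_on_Fc:
  "(\<And>p. continuous_on D (\<lambda>v. E v p)) \<Longrightarrow> continuous_on D (\<lambda>v. Fc (E v))"
  unfolding Fc_def by (intro continuous_intros)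

lemma holomorphic_on_Fc:
  "(\<And>p. (\<lambda>v. E v p) holomorphic_on D) \<Longrightarrow> (\<lambda>v. Fc (E v)) holomorphic_on D"
  unfolding Fc_def by (intro holomorphic_intros)

lemma F_line_poly:
  assumes "X \<in> Sym2" "Y \<in> Sym2"
  shows "\<exists>q. \<forall>t. F (X + t *\<^sub>R Y) = poly q t"
proof -
  have "F (X + t *\<^sub>R Y) =
      (\<Sum>\<alpha>\<in>exponents. c \<alpha> * (\<Prod>p\<in>UNIV. (X $ fst p $ snd p + t * Y $ fst p $ snd p) ^ \<alpha> p))" for t
    using F_eq_monomial_sum[OF Sym2_add[OF assms(1) Sym2_scaleR[OF assms(2)]]] by (simp add: exponents_def)
  then show ?thesis by (simp only: sum_prod_linear_eq_poly) blast
qed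

lemma continuous_on_F_line:
  assumes "X \<in> Sym2" "Y \<in> Sym2"
  shows "continuous_on S (\<lambda>t. F (X + t *\<^sub>R Y))"
proof -
  obtain q where q: "\<And>t. F (X + t *\<^sub>R Y) = poly q t" using F_line_poly[OF assms] by blast
  show ?thesis unfolding q by (intro continuous_intros)
qed

lemma Fc_line_eq_map_poly:
  assumes X: "X \<in> Sym2" and Y: "Y \<in> Sym2" and q: "\<And>t. poly q t = F (X + t *\<^sub>R Y)"
  shows "Fc (\<lambda>p. cmat X p + z * cmat Y p) = poly (map_poly of_real q) z"
proof -
  obtain Q where Q: "\<And>z. Fc (\<lambda>p. cmat X p + z * cmat Y p) = poly Q z"
    unfolding Fc_def sum_prod_linear_eq_poly by blast
  have "Q = map_poly of_real q"
  proof (rule complex_poly_eqI_on_reals)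
    fix t :: real
    show "poly Q (of_real t) = poly (map_poly of_real q) (of_real t)"
      using Q[of "of_real t"] Fc_cmat_line[OF X Y] by (simp add: q poly_map_poly_of_real)
  qed
  then show ?thesis using Q by simp
qed

lemma F_scale: "A \<in> Sym2 \<Longrightarrow> F (t *\<^sub>R A) = t ^ N * F A"
proof -
  assume A: "A \<in> Sym2"
  have "(of_real (F (t *\<^sub>R A)) :: complex) = Fc (\<lambda>p. of_real t * cmat A p)"
    using Fc_cmat[OF Sym2_scaleR[OF A]] by (simp add: cmat_scaleR)
  also have "\<dots> = of_real (t ^ N * F A)" by (simp add: Fc_scale Fc_cmat[OF A])
  finally show ?thesis by (rule of_real_eq_iff[THEN iffD1])
qed

text \<open>Viewed from infinity, the line \<open>s \<mapsto> M + s Y\<close> is dominated by its leading term \<open>s\<^sup>N F Y\<close>.\<close>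

lemma Fc_line_reverse:
  assumes "s \<noteq> 0"
  shows "Fc (\<lambda>p. M p + s * cmat Y p) = s ^ N * Fc (\<lambda>p. cmat Y p + (1 / s) * M p)"
proof -
  have "(\<lambda>p. M p + s * cmat Y p) = (\<lambda>p. s * (cmat Y p + (1 / s) * M p))"
    using assms by (auto simp: fun_eq_iff field_simps)
  then show ?thesis by (simp add: Fc_scale)
qed

lemma Fc_line_not_constant:
  assumes Y: "Y \<in> Sym2" "F Y \<noteq> 0" and unbounded: "\<not> bounded Om"
  shows "\<not> (\<lambda>s. Fc (\<lambda>p. M p + s * cmat Y p)) constant_on Om"
proof
  assume "(\<lambda>s. Fc (\<lambda>p. M p + s * cmat Y p)) constant_on Om"
  then obtain k where k: "\<And>s. s \<in> Om \<Longrightarrow> Fc (\<lambda>p. M p + s * cmat Y p) = k"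
    unfolding constant_on_def by blast
  define \<phi> where "\<phi> w = Fc (\<lambda>p. cmat Y p + w * M p)" for w
  define K where "K = norm (Fc (cmat Y))"
  have K: "K > 0" using Y Fc_cmat by (simp add: K_def)
  have "continuous_on UNIV \<phi>" unfolding \<phi>_def by (intro continuous_on_Fc continuous_intros)
  then have "(\<phi> \<longlongrightarrow> \<phi> 0) (at 0)" by (simp add: continuous_on_eq_continuous_at isCont_def)
  then have "((\<lambda>w. norm (\<phi> w)) \<longlongrightarrow> norm (\<phi> 0)) (at 0)" by (rule tendsto_norm)
  then have "((\<lambda>w. norm (\<phi> w)) \<longlongrightarrow> K) (at 0)" by (simp add: K_def \<phi>_def)
  then have "\<forall>\<^sub>F w in at 0. K / 2 < norm (\<phi> w)" by (rule order_tendstoD) (use K in simp)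
  then obtain d where d: "d > 0" and big: "\<And>w. w \<noteq> 0 \<Longrightarrow> norm w < d \<Longrightarrow> K / 2 < norm (\<phi> w)"
    by (auto simp: eventually_at dist_norm)
  obtain s where sO: "s \<in> Om" and sR: "max (max 1 (1 / d)) (2 * (norm k + 1) / K) < norm s"
    using unbounded unfolding bounded_iff by (meson not_le)
  then have s1: "1 < norm s" and s0: "s \<noteq> 0" by auto
  have "norm (1 / s) < d" using sR d s0 by (simp add: norm_divide field_simps)
  then have "K / 2 < norm (\<phi> (1 / s))" using s0 by (intro big) auto
  moreover have "norm s \<le> norm s ^ N" using s1 degree_pos by (metis less_imp_le power_increasing power_one_right)
  ultimately have "norm s * (K / 2) \<le> norm s ^ N * norm (\<phi> (1 / s))"
    using K by (intro mult_mono) auto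
  also have "\<dots> = norm k"
    using k[OF sO, symmetric] Fc_line_reverse[OF s0] by (simp add: \<phi>_def norm_mult norm_power)
  finally show False using sR K by (simp add: field_simps)
qed

lemma Fc_line_roots_locally_bounded:
  fixes M :: "'a::metric_space \<Rightarrow> 'n \<times> 'n \<Rightarrow> complex"
  assumes Mc: "\<And>p. continuous_on T (\<lambda>u. M u p)" and Y: "Y \<in> Sym2" "F Y \<noteq> 0" and u: "u \<in> T"
  shows "\<exists>e>0. \<exists>R. \<forall>v\<in>T. dist v u < e \<longrightarrow> (\<forall>s. Fc (\<lambda>p. M v p + s * cmat Y p) = 0 \<longrightarrow> norm s \<le> R)"
proof -
  define \<phi> where "\<phi> x = Fc (\<lambda>p. cmat Y p + snd x * M (fst x) p)" for x :: "'a \<times> complex"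
  have "continuous_on (T \<times> UNIV) (\<lambda>x. M (fst x) p)" for p
    by (rule continuous_on_compose2[OF Mc continuous_on_fst]) auto
  then have "continuous_on (T \<times> UNIV) \<phi>" unfolding \<phi>_def
    by (intro continuous_on_Fc continuous_intros)
  moreover have "(u, 0) \<in> T \<times> UNIV" using u by simp
  moreover have "norm (\<phi> (u, 0)) > 0" using Y Fc_cmat by (simp add: \<phi>_def)
  ultimately have "\<exists>d>0. \<forall>x\<in>T \<times> UNIV. dist x (u, 0) < d \<longrightarrow> dist (\<phi> x) (\<phi> (u, 0)) < norm (\<phi> (u, 0))"
    unfolding continuous_on_iff by blast
  then obtain d where d: "d > 0" and
    dd: "\<And>x. x \<in> T \<times> UNIV \<Longrightarrow> dist x (u, 0) < d \<Longrightarrow> dist (\<phi> x) (\<phi> (u, 0)) < norm (\<phi> (u, 0))"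
    by blast
  have "norm s \<le> 2 / d"
    if vT: "v \<in> T" and vu: "dist v u < d / 2" and z: "Fc (\<lambda>p. M v p + s * cmat Y p) = 0" for v s
  proof (rule ccontr)
    assume "\<not> norm s \<le> 2 / d"
    then have sb: "norm s > 2 / d" and s0: "s \<noteq> 0" using d by (auto simp: not_le)
    then have "norm (1 / s) < d / 2" using d by (simp add: norm_divide field_simps)
    then have "dist (v, 1 / s) (u, 0) < d"
      using dist_Pair_le_add[of v "1/s" u 0] vu by (simp add: dist_norm)
    then have "dist (\<phi> (v, 1 / s)) (\<phi> (u, 0)) < norm (\<phi> (u, 0))" using dd vT by simp
    then have "\<phi> (v, 1 / s) \<noteq> 0" by auto
    moreover have "Fc (\<lambda>p. M v p + s * cmat Y p) = s ^ N * \<phi> (v, 1 / s)"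
      using Fc_line_reverse[OF s0] by (simp add: \<phi>_def)
    ultimately show False using z s0 by simp
  qed
  then show ?thesis using d by (intro exI[of _ "d / 2"]) auto
qed

lemma Fc_family_zero_free:
  fixes M :: "'a::heine_borel \<Rightarrow> 'n \<times> 'n \<Rightarrow> complex"
  assumes T: "connected T" "u0 \<in> T" and Om: "open Om" "connected Om" "\<not> bounded Om"
    and Mc: "\<And>p. continuous_on T (\<lambda>u. M u p)" and Y: "Y \<in> Sym2" "F Y \<noteq> 0"
    and zeros_in_W: "\<And>u s. u \<in> T \<Longrightarrow> Fc (\<lambda>p. M u p + s * cmat Y p) = 0 \<Longrightarrow> s \<in> W"
    and boundary: "\<And>u s. u \<in> T \<Longrightarrow> s \<in> closure (Om \<inter> W) \<Longrightarrow> s \<notin> Om \<Longrightarrow>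
                         Fc (\<lambda>p. M u p + s * cmat Y p) \<noteq> 0"
    and start: "\<And>s. s \<in> Om \<Longrightarrow> Fc (\<lambda>p. M u0 p + s * cmat Y p) \<noteq> 0"
    and "u \<in> T" "s \<in> Om"
  shows "Fc (\<lambda>p. M u p + s * cmat Y p) \<noteq> 0"
proof (rule zero_free_connected_family[OF T Om(1,2), where f = "\<lambda>u s. Fc (\<lambda>p. M u p + s * cmat Y p)"
      and W = W])
  have "continuous_on (T \<times> UNIV) (\<lambda>x. M (fst x) p)" for p
    by (rule continuous_on_compose2[OF Mc continuous_on_fst]) auto
  then have "continuous_on (T \<times> UNIV) (\<lambda>x. Fc (\<lambda>p. M (fst x) p + snd x * cmat Y p))"
    by (intro continuous_on_Fc continuous_intros)
  then show "continuous_on (T \<times> UNIV) (\<lambda>(u, s). Fc (\<lambda>p. M u p + s * cmat Y p))"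
    by (simp add: case_prod_beta)
  show "(\<lambda>s. Fc (\<lambda>p. M u p + s * cmat Y p)) holomorphic_on Om" for u
    by (intro holomorphic_on_Fc holomorphic_intros)
  show "\<not> (\<lambda>s. Fc (\<lambda>p. M u p + s * cmat Y p)) constant_on Om" for u
    by (rule Fc_line_not_constant[OF Y Om(3)])
  show "\<exists>e>0. \<exists>R. \<forall>v\<in>T. dist v u < e \<longrightarrow> (\<forall>s. Fc (\<lambda>p. M v p + s * cmat Y p) = 0 \<longrightarrow> norm s \<le> R)"
    if "u \<in> T" for u
    by (rule Fc_line_roots_locally_bounded[OF Mc Y that])
qed (use zeros_in_W boundary start \<open>u \<in> T\<close> \<open>s \<in> Om\<close> in auto)

lemma gradient_exists:
  assumes A: "A \<in> Sym2"
  shows "\<exists>G. is_gradient F A G"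
proof -
  define Fp where "Fp M = (\<Sum>\<alpha>\<in>exponents. c \<alpha> * (\<Prod>p\<in>UNIV. (M $ fst p $ snd p) ^ \<alpha> p))"
    for M :: "real^'n^'n"
  obtain L where L: "(Fp has_derivative L) (at A)"
    unfolding Fp_def using has_derivative_monomial_sum by blast
  obtain G where G: "G \<in> Sym2" "\<And>B. B \<in> Sym2 \<Longrightarrow> L B = trace (G ** B)"
    using linear_eq_trace_Sym2[OF has_derivative_linear[OF L]] by blast
  have FFp: "F M = Fp M" if "M \<in> Sym2" for M
    using F_eq_monomial_sum[OF that] by (simp add: Fp_def exponents_def)
  have "((\<lambda>t. F (A + t *\<^sub>R B)) has_real_derivative trace (G ** B)) (at 0)" if B: "B \<in> Sym2" for B
  proof -
    have eq: "(\<lambda>t. F (A + t *\<^sub>R B)) = (\<lambda>t. Fp (A + t *\<^sub>R B))"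
      using A B by (auto simp: FFp Sym2_add Sym2_scaleR)
    have "((\<lambda>t::real. A + t *\<^sub>R B) has_derivative (\<lambda>t. t *\<^sub>R B)) (at 0)"
      by (intro derivative_eq_intros) auto
    moreover have "(Fp has_derivative L) (at ((\<lambda>t::real. A + t *\<^sub>R B) 0))" using L by simp
    ultimately have "((\<lambda>t. Fp (A + t *\<^sub>R B)) has_derivative (\<lambda>t. L (t *\<^sub>R B))) (at 0)"
      by (rule has_derivative_compose)
    moreover have "(\<lambda>t. L (t *\<^sub>R B)) = (*) (trace (G ** B))"
      using G(2)[OF B] linear_scale[OF has_derivative_linear[OF L]] by (auto simp: fun_eq_iff)
    ultimately show ?thesis unfolding eq has_field_derivative_def by simp
  qed
  then show ?thesis using G(1) unfolding is_gradient_def by blast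
qed

section \<open>Hyperbolic directions and their cones\<close>

definition hyperbolic_direction :: "real^'n^'n \<Rightarrow> bool" where
  "hyperbolic_direction e \<longleftrightarrow> e \<in> Sym2 \<and> 0 < F e \<and>
     (\<forall>X\<in>Sym2. \<forall>z. Fc (\<lambda>p. cmat X p + z * cmat e p) = 0 \<longrightarrow> z \<in> \<real>)"

definition hcone :: "real^'n^'n \<Rightarrow> (real^'n^'n) set" where
  "hcone e = {y \<in> Sym2. \<forall>t\<ge>0. F (t *\<^sub>R e + y) \<noteq> 0}"

lemma hyperbolic_direction_mat_1: "hyperbolic_direction (mat 1)"
  unfolding hyperbolic_direction_def
proof (intro conjI ballI allI impI)
  fix X :: "real^'n^'n" and z assume X: "X \<in> Sym2" and z: "Fc (\<lambda>p. cmat X p + z * cmat (mat 1) p) = 0"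
  obtain q where q: "\<And>t. poly q t = F (t *\<^sub>R mat 1 + X)"
    and real: "\<And>z. poly (map_poly complex_of_real q) z = 0 \<Longrightarrow> z \<in> \<real>"
    using real_rooted[OF X] unfolding real_rooted_along_I_def by blast
  have "Fc (\<lambda>p. cmat X p + z * cmat (mat 1) p) = poly (map_poly of_real q) z"
    by (rule Fc_line_eq_map_poly[OF X Sym2_mat]) (simp add: q add.commute)
  then show "z \<in> \<real>" using z real by simp
qed (simp_all add: Sym2_mat F_mat_1_pos)

lemma hyperbolic_direction_root_real:
  "hyperbolic_direction e \<Longrightarrow> X \<in> Sym2 \<Longrightarrow> Fc (\<lambda>p. cmat X p + s * cmat e p) = 0 \<Longrightarrow> s \<in> \<real>"
  unfolding hyperbolic_direction_def by blast

lemma hcone_Sym2: "y \<in> hcone e \<Longrightarrow> y \<in> Sym2"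
  by (simp add: hcone_def)

lemma hcone_F_nonzero: "y \<in> hcone e \<Longrightarrow> F y \<noteq> 0"
  unfolding hcone_def by (metis (mono_tags, lifting) add_0 mem_Collect_eq order_refl scaleR_zero_left)

lemma hcone_shift: "y \<in> hcone e \<Longrightarrow> e \<in> Sym2 \<Longrightarrow> 0 \<le> s \<Longrightarrow> s *\<^sub>R e + y \<in> hcone e"
  by (auto simp: hcone_def Sym2_add Sym2_scaleR add.assoc[symmetric] scaleR_add_left[symmetric])

lemma hcone_self:
  assumes "e \<in> Sym2" "0 < F e"
  shows "e \<in> hcone e"
proof -
  have "F (t *\<^sub>R e + e) \<noteq> 0" if "t \<ge> 0" for t
    using F_scale[OF assms(1), of "t + 1"] assms(2) that by (simp add: algebra_simps)
  then show ?thesis using assms by (simp add: hcone_def)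
qed

lemma hcone_segment:
  assumes e: "e \<in> Sym2" "0 < F e" and y: "y \<in> hcone e" and u: "0 \<le> u" "u \<le> 1"
  shows "(1 - u) *\<^sub>R e + u *\<^sub>R y \<in> hcone e"
proof (cases "u = 0")
  case True
  then show ?thesis using hcone_self[OF e] by simp
next
  case False
  then have "0 < u" using u by simp
  have ys: "y \<in> Sym2" using y by (rule hcone_Sym2)
  have "F (t *\<^sub>R e + ((1 - u) *\<^sub>R e + u *\<^sub>R y)) \<noteq> 0" if "0 \<le> t" for t
  proof -
    define s where "s = (t + 1 - u) / u"
    have "0 \<le> s" using \<open>0 < u\<close> u that by (simp add: s_def)
    then have nonzero: "F (s *\<^sub>R e + y) \<noteq> 0" using y by (simp add: hcone_def)
    have "u * s = t + 1 - u" using \<open>0 < u\<close> by (simp add: s_def)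
    have "t *\<^sub>R e + ((1 - u) *\<^sub>R e + u *\<^sub>R y) = (t + 1 - u) *\<^sub>R e + u *\<^sub>R y"
      by (simp add: algebra_simps)
    also have "\<dots> = (u * s) *\<^sub>R e + u *\<^sub>R y" using \<open>u * s = t + 1 - u\<close> by simp
    also have "\<dots> = u *\<^sub>R (s *\<^sub>R e + y)" by (simp add: scaleR_add_right)
    finally have "F (t *\<^sub>R e + ((1 - u) *\<^sub>R e + u *\<^sub>R y)) = u ^ N * F (s *\<^sub>R e + y)"
      using e(1) ys by (simp add: F_scale Sym2_add Sym2_scaleR)
    then show ?thesis using \<open>0 < u\<close> nonzero by simp
  qed
  then show ?thesis using e(1) ys by (simp add: hcone_def Sym2_add Sym2_scaleR)
qed

lemma connected_hcone: "e \<in> Sym2 \<Longrightarrow> 0 < F e \<Longrightarrow> connected (hcone e)"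
  by (intro starlike_imp_connected)
    (auto simp: starlike_def closed_segment_def intro!: bexI[of _ e] hcone_self hcone_segment)

lemma hcone_F_pos:
  assumes e: "e \<in> Sym2" "0 < F e" and y: "y \<in> hcone e"
  shows "0 < F y"
proof (rule ccontr)
  assume "\<not> 0 < F y"
  define g where "g u = F (e + u *\<^sub>R (y - e))" for u
  have "continuous_on {0..1} g" unfolding g_def
    by (rule continuous_on_F_line) (use e y hcone_Sym2 in \<open>auto simp: Sym2_diff\<close>)
  moreover have "g 1 \<le> 0" "0 \<le> g 0" using \<open>\<not> 0 < F y\<close> e by (auto simp: g_def)
  ultimately obtain u where u: "0 \<le> u" "u \<le> 1" "g u = 0"
    using IVT2'[of g 1 0 0] by auto
  have "e + u *\<^sub>R (y - e) = (1 - u) *\<^sub>R e + u *\<^sub>R y" by (simp add: algebra_simps)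
  then show False using hcone_F_nonzero[OF hcone_segment[OF e y u(1,2)]] u(3) by (simp add: g_def)
qed

lemma hcone_swap:
  assumes e: "e \<in> Sym2" "0 < F e" and e': "e' \<in> hcone e"
  shows "e \<in> hcone e'"
proof -
  have "F (t *\<^sub>R e' + e) \<noteq> 0" if "0 < t" for t
  proof -
    have "F (t *\<^sub>R ((1 / t) *\<^sub>R e + e')) = t ^ N * F ((1 / t) *\<^sub>R e + e')"
      using e(1) hcone_Sym2[OF e'] by (intro F_scale Sym2_add Sym2_scaleR)
    moreover have "F ((1 / t) *\<^sub>R e + e') \<noteq> 0" using e' that by (simp add: hcone_def)
    ultimately show ?thesis using that by (simp add: scaleR_add_right add.commute)
  qed
  then have "F (t *\<^sub>R e' + e) \<noteq> 0" if "0 \<le> t" for t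
    using that e(2) by (cases "t = 0") auto
  then show ?thesis using e(1) by (simp add: hcone_def)
qed

text \<open>The finitely many roots of \<open>t \<mapsto> F (y + t e)\<close> are negative, so y can be moved back along e.\<close>

lemma hcone_open_along:
  assumes y: "y \<in> hcone e" and e: "e \<in> Sym2"
  shows "\<exists>d>0. y - d *\<^sub>R e \<in> hcone e"
proof -
  have ys: "y \<in> Sym2" using y by (rule hcone_Sym2)
  obtain q where q: "\<And>t. F (y + t *\<^sub>R e) = poly q t" using F_line_poly[OF ys e] by blast
  define Z where "Z = {x. poly q x = 0}"
  have "q \<noteq> 0" using q[of 0] hcone_F_nonzero[OF y] by auto
  then have fin: "finite Z" unfolding Z_def by (rule poly_roots_finite)
  have neg: "x < 0" if "x \<in> Z" for x
  proof (rule ccontr)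
    assume "\<not> x < 0"
    then have "F (x *\<^sub>R e + y) \<noteq> 0" using y by (simp add: hcone_def)
    then show False using q[of x] that by (simp add: Z_def add.commute)
  qed
  define d where "d = (if Z = {} then 1 else - Max Z / 2)"
  have d: "0 < d"
  proof (cases "Z = {}")
    case False
    then show ?thesis using Max_in[OF fin False] neg by (simp add: d_def)
  qed (simp add: d_def)
  have "F (t *\<^sub>R e + (y - d *\<^sub>R e)) \<noteq> 0" if "0 \<le> t" for t
  proof
    assume "F (t *\<^sub>R e + (y - d *\<^sub>R e)) = 0"
    moreover have "t *\<^sub>R e + (y - d *\<^sub>R e) = y + (t - d) *\<^sub>R e" by (simp add: algebra_simps)
    ultimately have "t - d \<in> Z" using q by (simp add: Z_def)
    then have "Z \<noteq> {}" "t - d \<le> Max Z" using fin by (auto intro: Max_ge)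
    then show False using that d by (simp add: d_def)
  qed
  then show ?thesis using d ys e by (intro exI[of _ d]) (simp add: hcone_def Sym2_diff Sym2_scaleR)
qed

text \<open>Deform \<open>e'\<close> to y inside \<open>hcone e'\<close>: the zeros of \<open>s \<mapsto> F (u + s e)\<close> are real by
  hyperbolicity of e and cannot cross 0 since \<open>F u \<noteq> 0\<close>, so none enters the slit plane.\<close>

lemma hcone_subset:
  assumes he: "hyperbolic_direction e" and e': "e' \<in> hcone e"
  shows "hcone e' \<subseteq> hcone e"
proof
  fix y assume y: "y \<in> hcone e'"
  have e: "e \<in> Sym2" "0 < F e" using he by (auto simp: hyperbolic_direction_def)
  have e's: "e' \<in> Sym2" "0 < F e'" using e' by (auto intro: hcone_Sym2 hcone_F_pos[OF e])
  have main: "Fc (\<lambda>p. cmat y p + s * cmat e p) \<noteq> 0" if "s \<in> - \<real>\<^sub>\<le>\<^sub>0" for s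
  proof (rule Fc_family_zero_free[of "hcone e'" e' "- \<real>\<^sub>\<le>\<^sub>0" cmat e \<real>])
    show "connected (hcone e')" using e's by (rule connected_hcone)
    show "e' \<in> hcone e'" using e's by (rule hcone_self)
    show "s \<in> \<real>" if "u \<in> hcone e'" "Fc (\<lambda>p. cmat u p + s * cmat e p) = 0" for u s
      using hyperbolic_direction_root_real[OF he hcone_Sym2[OF that(1)] that(2)] .
    show "Fc (\<lambda>p. cmat u p + s * cmat e p) \<noteq> 0"
      if "u \<in> hcone e'" "s \<in> closure (- \<real>\<^sub>\<le>\<^sub>0 \<inter> \<real>)" "s \<notin> - \<real>\<^sub>\<le>\<^sub>0" for u s
      using slit_plane_real_boundary[OF that(2,3)] hcone_F_nonzero[OF that(1)]
        Fc_cmat[OF hcone_Sym2[OF that(1)]] by simp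
    show "Fc (\<lambda>p. cmat e' p + s * cmat e p) \<noteq> 0" if "s \<in> - \<real>\<^sub>\<le>\<^sub>0" for s
    proof
      assume z: "Fc (\<lambda>p. cmat e' p + s * cmat e p) = 0"
      then have "s \<in> \<real>" by (rule hyperbolic_direction_root_real[OF he e's(1)])
      then obtain r where r: "s = of_real r" by (auto elim: Reals_cases)
      then have "r > 0" using that by (auto simp: complex_nonpos_Reals_iff not_le)
      then have "F (r *\<^sub>R e + e') \<noteq> 0" using e' by (simp add: hcone_def)
      then show False using z Fc_cmat_line[OF e's(1) e(1), of r] r by (simp add: add.commute)
    qed
  qed (use e y that in \<open>auto simp: connected_slit_plane not_bounded_slit_plane continuous_on_cmat\<close>)
  have "F (t *\<^sub>R e + y) \<noteq> 0" if "0 < t" for t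
    using main[of "of_real t"] that Fc_cmat_line[OF hcone_Sym2[OF y] e(1), of t]
    by (simp add: complex_nonpos_Reals_iff add.commute)
  then have "F (t *\<^sub>R e + y) \<noteq> 0" if "0 \<le> t" for t
    using that hcone_F_nonzero[OF y] by (cases "t = 0") auto
  then show "y \<in> hcone e" using hcone_Sym2[OF y] by (simp add: hcone_def)
qed

subsection \<open>Garding's theorem: points of the cone are hyperbolic directions\<close>

text \<open>A zero t would give the root \<open>\<i>/t\<close> of \<open>s \<mapsto> F (y + s e)\<close>, which is real only if it is
  a positive real or \<open>Im t < 0\<close>.\<close>

lemma Fc_imaginary_line_zero_free:
  assumes he: "hyperbolic_direction e" and y: "y \<in> hcone e" and t: "0 < Im t"
  shows "Fc (\<lambda>p. \<i> * cmat e p + t * cmat y p) \<noteq> 0"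
proof
  assume "Fc (\<lambda>p. \<i> * cmat e p + t * cmat y p) = 0"
  moreover have t0: "t \<noteq> 0" using t by auto
  ultimately have zero: "Fc (\<lambda>p. cmat y p + (\<i> / t) * cmat e p) = 0"
    using Fc_line_reverse[OF t0, of "\<lambda>p. \<i> * cmat e p" y] by simp
  have e: "e \<in> Sym2" using he by (simp add: hyperbolic_direction_def)
  have ys: "y \<in> Sym2" using y by (rule hcone_Sym2)
  have "\<i> / t \<in> \<real>" using zero by (rule hyperbolic_direction_root_real[OF he ys])
  then obtain r where r: "\<i> / t = of_real r" by (auto elim: Reals_cases)
  show False
  proof (cases "0 < r")
    case True
    then have "F (r *\<^sub>R e + y) \<noteq> 0" using y by (simp add: hcone_def)
    then show False using zero r Fc_cmat_line[OF ys e, of r] by (simp add: add.commute)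
  next
    case False
    moreover have "r \<noteq> 0" using r t0 by auto
    moreover have "t = \<i> / of_real r" using r t0 \<open>r \<noteq> 0\<close> by (auto simp: field_simps)
    ultimately show False using t by simp
  qed
qed

text \<open>Deform \<open>\<beta> = 0\<close> to \<open>\<beta> = 1\<close> in \<open>t \<mapsto> F (\<beta> X + \<i> e + t y)\<close>: a real zero t would make \<open>\<i>\<close> a
  root along the hyperbolic direction e.\<close>

lemma Fc_line_add_imaginary_zero_free:
  assumes he: "hyperbolic_direction e" and y: "y \<in> hcone e" and X: "X \<in> Sym2" and t: "0 < Im t"
  shows "Fc (\<lambda>p. cmat X p + \<i> * cmat e p + t * cmat y p) \<noteq> 0"
proof -
  have ys: "y \<in> Sym2" and Fy: "F y \<noteq> 0" using hcone_Sym2[OF y] hcone_F_nonzero[OF y] .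
  have "Fc (\<lambda>p. of_real 1 * cmat X p + \<i> * cmat e p + t * cmat y p) \<noteq> 0"
  proof (rule Fc_family_zero_free[of "{0..1::real}" 0 "{z. 0 < Im z}" "\<lambda>\<beta> p. of_real \<beta> * cmat X p + \<i> * cmat e p" y UNIV])
    show "Fc (\<lambda>p. of_real u * cmat X p + \<i> * cmat e p + s * cmat y p) \<noteq> 0"
      if "s \<in> closure ({z. 0 < Im z} \<inter> UNIV)" "s \<notin> {z. 0 < Im z}" for u s
    proof
      assume zero: "Fc (\<lambda>p. of_real u * cmat X p + \<i> * cmat e p + s * cmat y p) = 0"
      have "closure {z. 0 < Im z} \<subseteq> {z. 0 \<le> Im z}"
        by (rule closure_minimal) (auto intro: closed_halfspace_Im_ge)
      then have "s = of_real (Re s)" using that by (auto simp: complex_eq_iff)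
      then have "(\<lambda>p. of_real u * cmat X p + \<i> * cmat e p + s * cmat y p) =
          (\<lambda>p. cmat (u *\<^sub>R X + Re s *\<^sub>R y) p + \<i> * cmat e p)"
        by (subst (1) \<open>s = of_real (Re s)\<close>) (simp add: cmat_add cmat_scaleR algebra_simps)
      then have "\<i> \<in> \<real>"
        using zero X ys by (intro hyperbolic_direction_root_real[OF he]) (auto intro: Sym2_add Sym2_scaleR)
      then show False by (simp add: complex_is_Real_iff)
    qed
    show "Fc (\<lambda>p. of_real 0 * cmat X p + \<i> * cmat e p + s * cmat y p) \<noteq> 0"
      if "s \<in> {z. 0 < Im z}" for s
      using Fc_imaginary_line_zero_free[OF he y] that by simp
  qed (use ys Fy t in \<open>auto simp: open_halfspace_Im_gt convex_connected[OF convex_halfspace_Im_gt]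
        not_bounded_upper_half_plane intro!: continuous_intros\<close>)
  then show ?thesis by simp
qed

text \<open>Letting the imaginary shift \<open>\<i> a e\<close> tend to 0, Hurwitz's theorem removes it.\<close>

lemma Fc_line_hcone_zero_free:
  assumes he: "hyperbolic_direction e" and y: "y \<in> hcone e" and X: "X \<in> Sym2" and z: "0 < Im z"
  shows "Fc (\<lambda>p. cmat X p + z * cmat y p) \<noteq> 0"
proof -
  have e: "e \<in> Sym2" using he by (simp add: hyperbolic_direction_def)
  have ys: "y \<in> Sym2" and Fy: "F y \<noteq> 0" using hcone_Sym2[OF y] hcone_F_nonzero[OF y] .
  define f where "f a t = Fc (\<lambda>p. cmat X p + (\<i> * of_real a) * cmat e p + t * cmat y p)" for a :: real and t
  have shifted: "f a t \<noteq> 0" if "0 < a" "0 < Im t" for a t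
  proof -
    have "(\<lambda>p. cmat X p + (\<i> * of_real a) * cmat e p + t * cmat y p) =
          (\<lambda>p. of_real a * (cmat ((1 / a) *\<^sub>R X) p + \<i> * cmat e p + (t / of_real a) * cmat y p))"
      using that by (auto simp: fun_eq_iff cmat_scaleR field_simps)
    moreover have "Fc (\<lambda>p. cmat ((1 / a) *\<^sub>R X) p + \<i> * cmat e p + (t / of_real a) * cmat y p) \<noteq> 0"
      using that by (intro Fc_line_add_imaginary_zero_free[OF he y] Sym2_scaleR X) simp
    ultimately show ?thesis using that by (simp add: f_def Fc_scale)
  qed
  define g where "g k = inverse (real (Suc k))" for k
  have "continuous_on (UNIV \<times> UNIV) (\<lambda>x. Fc (\<lambda>p. cmat X p + (\<i> * of_real (fst x)) * cmat e p + snd x * cmat y p))"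
    by (intro continuous_on_Fc continuous_intros)
  then have cont: "continuous_on (UNIV \<times> UNIV) (\<lambda>(a, t). f a t)"
    by (simp add: f_def case_prod_beta)
  have hol: "f a holomorphic_on {z. 0 < Im z}" for a
    unfolding f_def by (intro holomorphic_on_Fc holomorphic_intros)
  have "f 0 z \<noteq> 0"
  proof (rule Hurwitz_no_zeros[of "{z. 0 < Im z}" "\<lambda>k. f (g k)" "f 0" z])
    show "uniform_limit K (\<lambda>k. f (g k)) (f 0) sequentially" if "compact K" for K
      using LIMSEQ_inverse_real_of_nat unfolding g_def
      by (intro uniform_limit_jointly_continuous[OF cont _ _ _ that]) auto
    show "\<not> f 0 constant_on {z. 0 < Im z}" unfolding f_def
      by (rule Fc_line_not_constant[OF ys Fy not_bounded_upper_half_plane])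
    show "f (g k) t \<noteq> 0" if "t \<in> {z. 0 < Im z}" for k t
      using that by (intro shifted) (auto simp: g_def)
  qed (use z hol in \<open>auto simp: open_halfspace_Im_gt convex_connected[OF convex_halfspace_Im_gt]\<close>)
  then show ?thesis by (simp add: f_def)
qed

lemma hyperbolic_direction_hcone:
  assumes he: "hyperbolic_direction e" and y: "y \<in> hcone e"
  shows "hyperbolic_direction y"
proof -
  have e: "e \<in> Sym2" "0 < F e" using he by (auto simp: hyperbolic_direction_def)
  have "z \<in> \<real>" if X: "X \<in> Sym2" and zero: "Fc (\<lambda>p. cmat X p + z * cmat y p) = 0" for X z
  proof (rule ccontr)
    assume "z \<notin> \<real>"
    then consider "0 < Im z" | "0 < Im (cnj z)" by (force simp: complex_is_Real_iff)
    then show False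
    proof cases
      case 1
      then show False using Fc_line_hcone_zero_free[OF he y X] zero by blast
    next
      case 2
      have "Fc (\<lambda>p. cmat X p + cnj z * cmat y p) = cnj (Fc (\<lambda>p. cmat X p + z * cmat y p))"
        using Fc_cnj[of "\<lambda>p. cmat X p + z * cmat y p"] by (simp add: cmat_def)
      then show False using Fc_line_hcone_zero_free[OF he y X 2] zero by simp
    qed
  qed
  then show ?thesis unfolding hyperbolic_direction_def using hcone_Sym2[OF y] hcone_F_pos[OF e y] by blast
qed

section \<open>The Garding cone\<close>

lemma hcone_mat_1_subset_garding_cone: "hcone (mat 1) \<subseteq> garding_cone F"
proof
  fix y assume y: "y \<in> hcone (mat 1)"
  have "closed_segment (mat 1) y \<subseteq> {A \<in> Sym2. F A \<noteq> 0}"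
    unfolding closed_segment_def using hcone_segment[OF Sym2_mat F_mat_1_pos y] hcone_F_nonzero hcone_Sym2
    by blast
  then show "y \<in> garding_cone F" unfolding garding_cone_def
    by (intro CollectI connected_componentI[OF connected_segment]) auto
qed

lemma garding_cone_subset_hcone_mat_1: "garding_cone F \<subseteq> hcone (mat 1)"
proof
  fix A assume A: "A \<in> garding_cone F"
  have sub: "garding_cone F \<subseteq> {A \<in> Sym2. F A \<noteq> 0}"
    unfolding garding_cone_def by (rule connected_component_subset)
  have I: "mat 1 \<in> garding_cone F" unfolding garding_cone_def
    using F_mat_1_pos Sym2_mat by (intro CollectI connected_component_refl) auto
  have main: "Fc (\<lambda>p. cmat A p + s * cmat (mat 1) p) \<noteq> 0" if "s \<in> - \<real>\<^sub>\<le>\<^sub>0" for s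
  proof (rule Fc_family_zero_free[of "garding_cone F" "mat 1" "- \<real>\<^sub>\<le>\<^sub>0" cmat "mat 1" \<real>])
    show "s \<in> \<real>" if "u \<in> garding_cone F" "Fc (\<lambda>p. cmat u p + s * cmat (mat 1) p) = 0" for u s
      using hyperbolic_direction_root_real[OF hyperbolic_direction_mat_1 _ that(2)] sub that(1) by auto
    show "Fc (\<lambda>p. cmat u p + s * cmat (mat 1) p) \<noteq> 0"
      if "u \<in> garding_cone F" "s \<in> closure (- \<real>\<^sub>\<le>\<^sub>0 \<inter> \<real>)" "s \<notin> - \<real>\<^sub>\<le>\<^sub>0" for u s
      using slit_plane_real_boundary[OF that(2,3)] sub that(1) Fc_cmat[of u] by auto
    show "Fc (\<lambda>p. cmat (mat 1) p + s * cmat (mat 1) p) \<noteq> 0" if "s \<in> - \<real>\<^sub>\<le>\<^sub>0" for s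
    proof -
      have "Fc (\<lambda>p. cmat (mat 1) p + s * cmat (mat 1) p) = (1 + s) ^ N * of_real (F (mat 1))"
        using Fc_scale[of "1 + s" "cmat (mat 1)"] by (simp add: Fc_cmat[OF Sym2_mat] algebra_simps)
      moreover have "1 + s \<noteq> 0" using that by (auto simp: complex_nonpos_Reals_iff complex_eq_iff)
      ultimately show ?thesis using F_mat_1_pos by simp
    qed
  qed (use A I that F_mat_1_pos in \<open>auto simp: garding_cone_def connected_slit_plane
        not_bounded_slit_plane continuous_on_cmat Sym2_mat\<close>)
  have "F (t *\<^sub>R mat 1 + A) \<noteq> 0" if "0 < t" for t
    using main[of "of_real t"] that Fc_cmat_line[of A "mat 1" t] sub A
    by (auto simp: complex_nonpos_Reals_iff add.commute Sym2_mat)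
  then have "F (t *\<^sub>R mat 1 + A) \<noteq> 0" if "0 \<le> t" for t
    using that sub A by (cases "t = 0") auto
  then show "A \<in> hcone (mat 1)" using sub A by (auto simp: hcone_def)
qed

lemma garding_cone_eq_hcone_mat_1: "garding_cone F = hcone (mat 1)"
  using garding_cone_subset_hcone_mat_1 hcone_mat_1_subset_garding_cone by blast

lemma garding_cone_Sym2: "A \<in> garding_cone F \<Longrightarrow> A \<in> Sym2"
  by (simp add: garding_cone_eq_hcone_mat_1 hcone_Sym2)

lemma garding_cone_F_pos: "A \<in> garding_cone F \<Longrightarrow> 0 < F A"
  using hcone_F_pos[OF Sym2_mat F_mat_1_pos] by (simp add: garding_cone_eq_hcone_mat_1)

lemma garding_cone_hyperbolic_direction: "A \<in> garding_cone F \<Longrightarrow> hyperbolic_direction A"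
  by (simp add: garding_cone_eq_hcone_mat_1 hyperbolic_direction_hcone[OF hyperbolic_direction_mat_1])

lemma garding_cone_add:
  assumes A: "A \<in> garding_cone F" and B: "B \<in> garding_cone F"
  shows "A + B \<in> garding_cone F"
proof -
  have I: "mat 1 \<in> Sym2" "0 < F (mat 1)" by (simp_all add: Sym2_mat F_mat_1_pos)
  have "F (s *\<^sub>R mat 1 + (A + B)) \<noteq> 0" if "0 \<le> s" for s
  proof -
    have sA: "s *\<^sub>R mat 1 + A \<in> garding_cone F"
      using A hcone_shift[OF _ I(1) that] by (simp add: garding_cone_eq_hcone_mat_1)
    then have "mat 1 \<in> hcone (s *\<^sub>R mat 1 + A)"
      by (intro hcone_swap[OF I]) (simp add: garding_cone_eq_hcone_mat_1)
    then have "B \<in> hcone (s *\<^sub>R mat 1 + A)"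
      using hcone_subset[OF garding_cone_hyperbolic_direction[OF sA]] B
      by (auto simp: garding_cone_eq_hcone_mat_1)
    then have "\<forall>t\<ge>0. F (t *\<^sub>R (s *\<^sub>R mat 1 + A) + B) \<noteq> 0" by (simp add: hcone_def)
    then have "F (1 *\<^sub>R (s *\<^sub>R mat 1 + A) + B) \<noteq> 0" by (rule allE[of _ 1]) simp
    then show ?thesis by (simp add: add.assoc)
  qed
  then show ?thesis using A B
    by (simp add: garding_cone_eq_hcone_mat_1 hcone_def Sym2_add)
qed

end

section \<open>Ellipticity\<close>

locale garding_dirichlet = hyperbolic_polynomial F N c
  for F :: "real^'n^'n \<Rightarrow> real" and N c +
  assumes pos_def_garding_cone: "\<And>B. B \<in> Sym2 \<Longrightarrow> pos_def B \<Longrightarrow> B \<in> garding_cone F"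
begin

lemma garding_cone_add_pos_semidef:
  assumes A: "A \<in> garding_cone F" and P: "P \<in> Sym2" "pos_semidef P" and r: "0 \<le> r"
  shows "A + r *\<^sub>R P \<in> garding_cone F"
proof -
  obtain d where d: "0 < d" "A - d *\<^sub>R mat 1 \<in> garding_cone F"
    using hcone_open_along[of A "mat 1"] A by (auto simp: garding_cone_eq_hcone_mat_1 Sym2_mat)
  have "r *\<^sub>R P + d *\<^sub>R mat 1 \<in> garding_cone F"
    using P r d(1) by (intro pos_def_garding_cone pos_def_scaleR_add_mat Sym2_add Sym2_scaleR Sym2_mat)
  from garding_cone_add[OF d(2) this] show ?thesis by simp
qed

lemma F_line_pos_semidef_roots:
  assumes A: "A \<in> garding_cone F" and P: "P \<in> Sym2" "pos_semidef P"
    and q: "\<And>t. F (A + t *\<^sub>R P) = poly q t" and z: "poly (map_poly of_real q) z = 0"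
  shows "z \<in> \<real> \<and> Re z < 0"
proof -
  have As: "A \<in> Sym2" by (rule garding_cone_Sym2[OF A])
  have zero: "Fc (\<lambda>p. cmat A p + z * cmat P p) = 0"
    using z Fc_line_eq_map_poly[OF As P(1)] q by simp
  have "z \<noteq> 0" using zero Fc_cmat[OF As] garding_cone_F_pos[OF A] by auto
  then have "Fc (\<lambda>p. cmat P p + (1 / z) * cmat A p) = 0"
    using zero Fc_line_reverse[of z "cmat A" P] by simp
  then have "1 / z \<in> \<real>"
    by (rule hyperbolic_direction_root_real[OF garding_cone_hyperbolic_direction[OF A] P(1)])
  then have "z \<in> \<real>" using Reals_inverse by fastforce
  then obtain r where r: "z = of_real r" by (auto elim: Reals_cases)
  then have "F (A + r *\<^sub>R P) = 0" using zero Fc_cmat_line[OF As P(1)] by simp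
  moreover have "F (A + r *\<^sub>R P) \<noteq> 0" if "0 \<le> r"
    using garding_cone_F_pos[OF garding_cone_add_pos_semidef[OF A P that]] by simp
  ultimately show ?thesis using \<open>z \<in> \<real>\<close> r by force
qed

text \<open>If F is constant along \<open>A + t P\<close>, homogeneity shrinks \<open>A - t P\<close> to \<open>-P\<close> inside the cone.\<close>

lemma pos_semidef_in_edge:
  assumes A: "A \<in> garding_cone F" and P: "P \<in> Sym2" "pos_semidef P"
    and const: "\<And>t. F (A + t *\<^sub>R P) = F A"
  shows "P \<in> edge F"
proof -
  have As: "A \<in> Sym2" and FA: "0 < F A" using A by (auto intro: garding_cone_Sym2 garding_cone_F_pos)
  define \<epsilon> where "\<epsilon> n = inverse (real (Suc n))" for n
  have \<epsilon>: "\<epsilon> \<longlonglongrightarrow> 0" "\<And>n. 0 < \<epsilon> n"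
    unfolding \<epsilon>_def by (rule LIMSEQ_inverse_real_of_nat) simp
  have "(\<lambda>n. P + \<epsilon> n *\<^sub>R mat 1) \<longlonglongrightarrow> P"
    using tendsto_add[OF tendsto_const tendsto_scaleR[OF \<epsilon>(1) tendsto_const]] by simp
  moreover have "P + \<epsilon> n *\<^sub>R mat 1 \<in> garding_cone F" for n
    using pos_def_scaleR_add_mat[OF P(2) zero_le_one \<epsilon>(2)] P(1)
    by (intro pos_def_garding_cone) (auto simp: Sym2_add Sym2_scaleR Sym2_mat)
  ultimately have "P \<in> closure (garding_cone F)"
    unfolding closure_sequential by (intro exI[of _ "\<lambda>n. P + \<epsilon> n *\<^sub>R mat 1"]) blast
  have "\<epsilon> n *\<^sub>R A - P \<in> hcone A" for n
  proof -
    have "F (t *\<^sub>R A + (\<epsilon> n *\<^sub>R A - P)) \<noteq> 0" if "0 \<le> t" for t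
    proof -
      define u where "u = t + \<epsilon> n"
      have u: "0 < u" using that \<epsilon>(2)[of n] by (simp add: u_def)
      then have "t *\<^sub>R A + (\<epsilon> n *\<^sub>R A - P) = u *\<^sub>R (A + (- 1 / u) *\<^sub>R P)"
        by (simp add: u_def scaleR_add_right algebra_simps)
      moreover have "F (u *\<^sub>R (A + (- 1 / u) *\<^sub>R P)) = u ^ N * F (A + (- 1 / u) *\<^sub>R P)"
        using As P(1) by (intro F_scale Sym2_add Sym2_scaleR)
      moreover note const[of "- 1 / u"]
      ultimately show ?thesis using FA u by simp
    qed
    then show ?thesis using As P(1) by (simp add: hcone_def Sym2_diff Sym2_scaleR)
  qed
  then have "\<epsilon> n *\<^sub>R A - P \<in> garding_cone F" for n
    using hcone_subset[OF hyperbolic_direction_mat_1] A by (auto simp: garding_cone_eq_hcone_mat_1)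
  moreover have "(\<lambda>n. \<epsilon> n *\<^sub>R A - P) \<longlonglongrightarrow> - P"
    using tendsto_diff[OF tendsto_scaleR[OF \<epsilon>(1) tendsto_const] tendsto_const] by simp
  ultimately have "- P \<in> closure (garding_cone F)"
    unfolding closure_sequential by (intro exI[of _ "\<lambda>n. \<epsilon> n *\<^sub>R A - P"]) blast
  with \<open>P \<in> closure (garding_cone F)\<close> show ?thesis by (simp add: edge_def)
qed

lemma gradient_pos_def:
  assumes complete: "{P\<in>Sym2. pos_semidef P} \<inter> edge F = {0}"
    and A: "A \<in> garding_cone F" and G: "is_gradient F A G"
  shows "pos_def G"
  unfolding pos_def_def
proof (intro allI impI)
  fix x :: "real^'n" assume "x \<noteq> 0"
  define P where "P = outer_product x"
  have P: "P \<in> Sym2" "pos_semidef P" "P \<noteq> 0"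
    using \<open>x \<noteq> 0\<close> by (simp_all add: P_def outer_product_Sym2 pos_semidef_outer_product outer_product_eq_0_iff)
  obtain q where q: "\<And>t. F (A + t *\<^sub>R P) = poly q t"
    using F_line_poly[OF garding_cone_Sym2[OF A] P(1)] by blast
  have "((\<lambda>t. F (A + t *\<^sub>R P)) has_real_derivative trace (G ** P)) (at 0)"
    using G P(1) unfolding is_gradient_def by blast
  moreover have "((\<lambda>t. F (A + t *\<^sub>R P)) has_real_derivative poly (pderiv q) 0) (at 0)"
    unfolding q by (rule poly_DERIV)
  ultimately have deriv: "x \<bullet> (G *v x) = poly (pderiv q) 0"
    unfolding inner_mult_vec_eq_trace_outer_product P_def[symmetric] by (rule DERIV_unique)
  have "0 < degree q"
  proof (rule ccontr)
    assume "\<not> 0 < degree q"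
    then obtain a where "q = [:a:]" by (metis degree_eq_zeroE gr0I)
    then have "F (A + t *\<^sub>R P) = F A" for t using q[of t] q[of 0] by simp
    then have "P \<in> edge F" by (rule pos_semidef_in_edge[OF A P(1,2)])
    then show False using complete P by blast
  qed
  moreover have "0 < poly q 0" using q[of 0] garding_cone_F_pos[OF A] by simp
  ultimately have "0 < poly (pderiv q) 0"
    using F_line_pos_semidef_roots[OF A P(1,2) q] by (rule pderiv_pos_at_0_if_negative_roots)
  then show "0 < x \<bullet> (G *v x)" by (simp add: deriv)
qed

end

text \<open>In degree 0 the Garding cone is all of \<open>Sym2\<close>, whose edge contains the identity.\<close>

lemma complete_GD_degree_pos:
  fixes F :: "real^'n^'n \<Rightarrow> real"
  assumes "complete_GD N F"
  shows "1 \<le> N"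
proof (rule ccontr)
  assume "\<not> 1 \<le> N"
  then have N: "N = 0" by simp
  obtain c where rep: "\<And>A. A \<in> Sym2 \<Longrightarrow>
      F A = (\<Sum>\<alpha>\<in>{\<alpha>. (\<Sum>p\<in>UNIV. \<alpha> p) = N}. c \<alpha> * (\<Prod>p\<in>UNIV. (A $ fst p $ snd p) ^ \<alpha> p))"
    and FI: "0 < F (mat 1)" and complete: "{P\<in>Sym2. pos_semidef P} \<inter> edge F = {0}"
    using assms unfolding complete_GD_def GD_poly_def homog_poly_Sym2_def by blast
  have "F A = (\<Sum>\<alpha>\<in>{\<alpha>. (\<Sum>p\<in>UNIV. \<alpha> p) = 0}. c \<alpha>)" if "A \<in> Sym2" for A
    unfolding rep[OF that] N
  proof (rule sum.cong)
    fix \<alpha> :: "'n \<times> 'n \<Rightarrow> nat" assume "\<alpha> \<in> {\<alpha>. (\<Sum>p\<in>UNIV. \<alpha> p) = 0}"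
    then have "\<alpha> p = 0" for p by (cases p) simp
    then show "c \<alpha> * (\<Prod>p\<in>UNIV. (A $ fst p $ snd p) ^ \<alpha> p) = c \<alpha>" by simp
  qed simp
  then have "{A \<in> Sym2. F A \<noteq> 0} = Sym2" using FI Sym2_mat[of 1] by force
  then have "garding_cone F = Sym2"
    unfolding garding_cone_def using connected_component_eq_self[OF convex_connected[OF convex_Sym2] Sym2_mat]
    by simp
  moreover have "mat 1 \<in> Sym2" "- mat 1 \<in> Sym2"
    using Sym2_scaleR[OF Sym2_mat, of "-1" 1] by (simp_all add: Sym2_mat)
  ultimately have "mat 1 \<in> edge F"
    using closure_subset[of Sym2] by (auto simp: edge_def)
  moreover have "pos_semidef (mat 1 :: real^'n^'n)" by (simp add: pos_semidef_def)
  ultimately have "(mat 1 :: real^'n^'n) = 0" using complete Sym2_mat by blast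
  then have "(mat 1 :: real^'n^'n) $ undefined $ undefined = 0" by simp
  then show False by (simp add: mat_def)
qed

theorem propositionB1:
  fixes F :: "real^'n^'n \<Rightarrow> real" and N :: nat
  assumes "complete_GD N F"
  shows "\<forall>A\<in>garding_cone F.
           (\<exists>G. is_gradient F A G) \<and> (\<forall>G. is_gradient F A G \<longrightarrow> pos_def G)"
proof -
  obtain c where
      rep: "\<And>A. A \<in> Sym2 \<Longrightarrow>
        F A = (\<Sum>\<alpha>\<in>{\<alpha>. (\<Sum>p\<in>UNIV. \<alpha> p) = N}. c \<alpha> * (\<Prod>p\<in>UNIV. (A $ fst p $ snd p) ^ \<alpha> p))"
    and gd: "0 < F (mat 1)" "\<And>A. A \<in> Sym2 \<Longrightarrow> real_rooted_along_I F A"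
      "\<And>B. B \<in> Sym2 \<Longrightarrow> pos_def B \<Longrightarrow> B \<in> garding_cone F"
    and complete: "{P\<in>Sym2. pos_semidef P} \<inter> edge F = {0}"
    using assms unfolding complete_GD_def GD_poly_def homog_poly_Sym2_def by blast
  interpret garding_dirichlet F N c
    using rep gd complete_GD_degree_pos[OF assms] by unfold_locales auto
  show ?thesis
    using gradient_exists gradient_pos_def[OF complete] garding_cone_Sym2 by blast
qed

end
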